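(* Let $f\in C^1[0,1]$ with $f(0)=0$, $h:=f'$, $q$ satisfying (q), and $c^*$ as below. Let $c_2>c_1\ge c^*$, and let $z_1$, $z_2$ be solutions of $(P_{c_1})$ and $(P_{c_2})$ respectively. If $z_1(1)\le z_2(1)$, then $z_1(\varphi)<z_2(\varphi)$ for all $\varphi\in(0,1)$.
   Context: Condition (q): $q\in C[0,1]$, $q>0$ on $(0,1)$, $q(0)=q(1)=0$, and $\limsup_{\varphi\to0^+}q(\varphi)/\varphi<+\infty$. For $c\in\mathbb R$, a solution of problem $(P_c)$ is a function $z\in C[0,1]\cap C^1(0,1)$ with $\dot z(\varphi)=h(\varphi)-c-q(\varphi)/z(\varphi)$ and $z(\varphi)<0$ for all $\varphi\in(0,1)$, and $z(0)=0$. A solution of $(P^{00}_c)$ is a solution of $(P_c)$ which also satisfies $z(1)=0$. $c^*$ denotes the real number such that $(P^{00}_c)$ has a solution iff $c\ge c^*$ (that solution being unique). *)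

theory Defs
  imports "HOL-Analysis.Analysis"
begin

definition cond_q :: "(real \<Rightarrow> real) \<Rightarrow> bool" where
  "cond_q q \<longleftrightarrow> continuous_on {0..1} q \<and> (\<forall>\<phi>\<in>{0<..<1}. q \<phi> > 0) \<and> q 0 = 0 \<and> q 1 = 0 \<and>
     Limsup (at_right 0) (\<lambda>\<phi>. ereal (q \<phi> / \<phi>)) < \<infinity>"

definition sol_P :: "(real \<Rightarrow> real) \<Rightarrow> (real \<Rightarrow> real) \<Rightarrow> real \<Rightarrow> (real \<Rightarrow> real) \<Rightarrow> bool" where
  "sol_P h q c z \<longleftrightarrow> continuous_on {0..1} z \<and>
     (\<forall>\<phi>\<in>{0<..<1}. z differentiable (at \<phi>)) \<and> continuous_on {0<..<1} (deriv z) \<and>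
     (\<forall>\<phi>\<in>{0<..<1}. deriv z \<phi> = h \<phi> - c - q \<phi> / z \<phi> \<and> z \<phi> < 0) \<and> z 0 = 0"

definition sol_P00 :: "(real \<Rightarrow> real) \<Rightarrow> (real \<Rightarrow> real) \<Rightarrow> real \<Rightarrow> (real \<Rightarrow> real) \<Rightarrow> bool" where
  "sol_P00 h q c z \<longleftrightarrow> sol_P h q c z \<and> z 1 = 0"

end

theory Submission
  imports Defs
begin

text \<open>Put \<open>w = z\<^sub>2 - z\<^sub>1\<close>. Wherever \<open>z\<^sub>2 \<le> z\<^sub>1 < 0\<close>, the two differential equations give
  \<open>w' = -(c\<^sub>2 - c\<^sub>1) + q w / (z\<^sub>1 z\<^sub>2) < 0\<close>. Hence once \<open>w\<close> is nonpositive at some point of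
  \<open>(0,1)\<close> it stays nonpositive and strictly decreases up to \<open>1\<close>, which forces \<open>z\<^sub>2(1) < z\<^sub>1(1)\<close>.\<close>

lemma nonpos_stays_nonpos:
  fixes w w' :: "real \<Rightarrow> real"
  assumes cont: "continuous_on {a..b} w"
    and deriv: "\<And>x. x \<in> {a..<b} \<Longrightarrow> (w has_real_derivative w' x) (at x)"
    and neg: "\<And>x. x \<in> {a..<b} \<Longrightarrow> w x \<le> 0 \<Longrightarrow> w' x < 0"
    and wa: "w a \<le> 0" and t: "t \<in> {a..b}"
  shows "w t \<le> 0"
proof (rule ccontr)
  assume wt: "\<not> w t \<le> 0"
  define S where "S = {a..t} \<inter> w -` {..0}"
  have "continuous_on {a..t} w" using continuous_on_subset[OF cont] t by auto
  then have "closed S" unfolding S_def by (intro continuous_closed_preimage) auto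
  moreover have "a \<in> S" using wa t unfolding S_def by auto
  moreover have bdd: "bdd_above S" unfolding S_def by (auto intro: bdd_above_Int1)
  ultimately have "Sup S \<in> S" using closed_contains_Sup by blast
  define s where "s = Sup S"
  have ws: "w s \<le> 0" and s: "a \<le> s" "s \<le> t" using \<open>Sup S \<in> S\<close> unfolding s_def S_def by auto
  have "s < t" using ws wt s by (cases "s = t") auto
  then have sab: "s \<in> {a..<b}" using s t by auto
  obtain d where d: "d > 0" "\<And>e. e > 0 \<Longrightarrow> e < d \<Longrightarrow> w (s + e) < w s"
    using DERIV_neg_dec_right[OF deriv[OF sab] neg[OF sab ws]] by blast
  define e where "e = min (d/2) ((t - s)/2)"
  have e: "0 < e" "e < d" "s + e \<le> t"
    using d(1) \<open>s < t\<close> unfolding e_def by (auto simp: min_def field_simps)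
  have "s + e \<in> S" using d(2)[OF e(1,2)] ws e s unfolding S_def by auto
  then have "s + e \<le> s" unfolding s_def using bdd by (rule cSup_upper)
  then show False using e(1) by linarith
qed

lemma nonpos_strictly_decreasing:
  fixes w w' :: "real \<Rightarrow> real"
  assumes ab: "a < b" and cont: "continuous_on {a..b} w"
    and deriv: "\<And>x. x \<in> {a..<b} \<Longrightarrow> (w has_real_derivative w' x) (at x)"
    and neg: "\<And>x. x \<in> {a..<b} \<Longrightarrow> w x \<le> 0 \<Longrightarrow> w' x < 0"
    and wa: "w a \<le> 0"
  shows "w b < w a"
proof -
  have "w differentiable (at x)" if "a < x" "x < b" for x
    using deriv[of x] that real_differentiable_def by auto
  then obtain l x where x: "a < x" "x < b" "(w has_real_derivative l) (at x)"
    and mvt: "w b - w a = (b - a) * l"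
    using MVT[OF ab cont] by blast
  have "l = w' x" using DERIV_unique[OF x(3) deriv] x by auto
  moreover have "w x \<le> 0" using nonpos_stays_nonpos[OF cont deriv neg wa] x by auto
  ultimately have "l < 0" using neg x by auto
  then have "(b - a) * l < 0" using ab by (simp add: mult_pos_neg)
  then show ?thesis using mvt by linarith
qed

lemma sol_P_has_derivative:
  assumes "sol_P h q c z" "x \<in> {0<..<1}"
  shows "(z has_real_derivative (h x - c - q x / z x)) (at x)"
  using assms unfolding sol_P_def by (metis DERIV_deriv_iff_real_differentiable)

lemma riccati_rhs_diff_neg:
  fixes z1 z2 q :: real
  assumes "z1 < 0" "z2 < 0" "z2 \<le> z1" "q > 0" "c1 < c2"
  shows "(h - c2 - q / z2) - (h - c1 - q / z1) < 0"
proof -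
  have "(h - c2 - q / z2) - (h - c1 - q / z1) = -(c2 - c1) + q * (z2 - z1) / (z1 * z2)"
    using assms by (simp add: field_simps)
  moreover have "q * (z2 - z1) / (z1 * z2) \<le> 0"
    using assms by (intro divide_nonpos_pos mult_nonneg_nonpos) (auto intro: mult_neg_neg)
  ultimately show ?thesis using assms by linarith
qed

theorem corollary5p2:
  fixes f h q z1 z2 :: "real \<Rightarrow> real" and cstar c1 c2 :: real
  assumes f_deriv: "\<forall>x\<in>{0..1}. (f has_real_derivative h x) (at x within {0..1})"
    and h_cont: "continuous_on {0..1} h"
    and f0: "f 0 = 0"
    and q: "cond_q q"
    and cstar: "\<forall>c. (\<exists>z. sol_P00 h q c z) \<longleftrightarrow> c \<ge> cstar"
    and cstar_uniq: "\<forall>c z w. sol_P00 h q c z \<longrightarrow> sol_P00 h q c w \<longrightarrow> (\<forall>\<phi>\<in>{0..1}. z \<phi> = w \<phi>)"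
    and c12: "c2 > c1" "c1 \<ge> cstar"
    and z1: "sol_P h q c1 z1" and z2: "sol_P h q c2 z2"
    and z12: "z1 1 \<le> z2 1"
  shows "\<forall>\<phi>\<in>{0<..<1}. z1 \<phi> < z2 \<phi>"
proof (rule ccontr)
  define w where "w = (\<lambda>x. z2 x - z1 x)"
  define w' where "w' = (\<lambda>x. (h x - c2 - q x / z2 x) - (h x - c1 - q x / z1 x))"
  assume "\<not> (\<forall>\<phi>\<in>{0<..<1}. z1 \<phi> < z2 \<phi>)"
  then obtain p where p: "p \<in> {0<..<1}" "w p \<le> 0" unfolding w_def by force
  have "continuous_on {p..1} w"
    using z1 z2 p unfolding sol_P_def w_def
    by (auto intro!: continuous_intros elim: continuous_on_subset)
  moreover have "(w has_real_derivative w' x) (at x)" if "x \<in> {p..<1}" for x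
    unfolding w_def w'_def
    using that p by (intro DERIV_diff sol_P_has_derivative[OF z2] sol_P_has_derivative[OF z1]) auto
  moreover have "w' x < 0" if "x \<in> {p..<1}" "w x \<le> 0" for x
    using that p z1 z2 q c12(1) unfolding sol_P_def cond_q_def w_def w'_def
    by (intro riccati_rhs_diff_neg) auto
  ultimately have "w 1 < w p"
    using nonpos_strictly_decreasing[of p 1 w w'] p by fastforce
  then show False using p z12 unfolding w_def by auto
qed

end
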